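(* For $\Pi$-almost every environment $\xi$, $\mathbb{P}_\xi$-almost surely $$\frac1t\,[Y]_t\longrightarrow \eta^2\qquad(t\to\infty),$$ where $[Y]_t$ is the $n\times n$ matrix with entries $([Y]_t)_{ij}=\sum_{0\le r<t}(Y^i_{r+1}-Y^i_r)(Y^j_{r+1}-Y^j_r)$ and $(\eta^2)_{ij}=\sum_{u\in\mathbb{Z}^n}(u_i-b_i)(u_j-b_j)\bar P(u)$.
   Context: Let $\mathbb{S}$ be a finite set and $\pi$ a probability measure on $\mathbb{S}$. The environment $\xi=\{\xi_t(x): x\in\mathbb{Z}^n, t\in\mathbb{Z}^+\}$ consists of i.i.d. $\mathbb{S}$-valued random variables with law $\pi$; $\Pi$ denotes its law. Let $P_0$ be a probability distribution on $\mathbb{Z}^n$ and $c:\mathbb{Z}^n\times\mathbb{S}\to\mathbb{R}$ such that: $0\le P_0(u)+c(u,s)\le 1$ for all $u,s$; $\sum_{u}c(u,s)=0$ for all $s$; $\sum_{s}c(u,s)\pi(s)=0$ for all $u$; $P_0$ and $c$ have bounded range; and there is $b^c\in\mathbb{R}^n$ with $\sum_u u\,c(u,s)=b^c$ for all $s$. Given $\xi$, $(X_t)$ is the Markov chain on $\mathbb{Z}^n$ (from a fixed starting point) with $\mathbb{P}(X_{t+1}=y\mid X_t=x,\xi)=P_0(y-x)+c(y-x,\xi_t(x))$; $\mathbb{P}_\xi$ denotes this quenched law. Let $\bar P(u)=P_0(u)+\sum_s\pi(s)c(u,s)$, $b^0=\sum_u uP_0(u)$, $b=b^0+b^c$, $Y_t=X_t-tb$,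 with coordinates $Y^i_t$. *)

theory Defs
  imports "HOL-Probability.Probability"
begin

text \<open>Sites of the lattice Z^n are vectors int^'n; the environment is a function
  xi :: nat \<times> (int^'n) \<Rightarrow> 'S with xi (t,x) = xi_t(x).\<close>

definition env_law :: "'S pmf \<Rightarrow> (nat \<times> (int^'n) \<Rightarrow> 'S) measure" where
  "env_law \<pi> = PiM UNIV (\<lambda>_. measure_pmf \<pi>)"

definition trans_prob ::
  "((int^'n) \<Rightarrow> real) \<Rightarrow> ((int^'n) \<Rightarrow> 'S \<Rightarrow> real) \<Rightarrow> (nat \<times> (int^'n) \<Rightarrow> 'S)
     \<Rightarrow> nat \<Rightarrow> int^'n \<Rightarrow> int^'n \<Rightarrow> real" where
  "trans_prob P0 c \<xi> t x y = P0 (y - x) + c (y - x) (\<xi> (t, x))"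

definition quenched_chain ::
  "((int^'n) \<Rightarrow> real) \<Rightarrow> ((int^'n) \<Rightarrow> 'S \<Rightarrow> real) \<Rightarrow> (nat \<times> (int^'n) \<Rightarrow> 'S)
     \<Rightarrow> int^'n \<Rightarrow> 'w measure \<Rightarrow> (nat \<Rightarrow> 'w \<Rightarrow> int^'n) \<Rightarrow> bool" where
  "quenched_chain P0 c \<xi> x0 M X \<longleftrightarrow>
     prob_space M \<and>
     (\<forall>t. X t \<in> M \<rightarrow>\<^sub>M count_space UNIV) \<and>
     measure M {\<omega> \<in> space M. X 0 \<omega> = x0} = 1 \<and>
     (\<forall>t (xs :: nat \<Rightarrow> int^'n).
        measure M {\<omega> \<in> space M. \<forall>s\<le>Suc t. X s \<omega> = xs s} =
        measure M {\<omega> \<in> space M. \<forall>s\<le>t. X s \<omega> = xs s} * trans_prob P0 c \<xi> t (xs t) (xs (Suc t)))"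

text \<open>Quadratic variation matrix [Y]_t of Y_t = X_t - t b.\<close>
definition quad_var :: "real^'n \<Rightarrow> (nat \<Rightarrow> 'w \<Rightarrow> int^'n) \<Rightarrow> nat \<Rightarrow> 'w \<Rightarrow> real^'n^'n" where
  "quad_var b X t \<omega> = (\<chi> i j. \<Sum>r<t.
      (real_of_int (X (Suc r) \<omega> $ i) - real (Suc r) * b $ i - (real_of_int (X r \<omega> $ i) - real r * b $ i)) *
      (real_of_int (X (Suc r) \<omega> $ j) - real (Suc r) * b $ j - (real_of_int (X r \<omega> $ j) - real r * b $ j)))"

end

theory Submission
  imports Defs
begin

text \<open>The steps take values in a finite set \<open>U\<close>, so everything reduces to finite sums over step
  sequences \<open>us \<in> U^t\<close>; the quenched probability of following \<open>us\<close> is the product of the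
  transition probabilities along the path. The walk reads the environment of time \<open>r\<close> only at
  time \<open>r\<close>, so under \<open>\<Pi>\<close> these factors are independent and average to \<open>\<Prod>r<t. P0 (us r)\<close>:
  annealed, the steps are i.i.d. with law \<open>P0\<close>. For \<open>f\<close> centred under \<open>P0\<close> and
  \<open>S_t = \<Sum>r<t. f (X (r+1) - X r)\<close> this gives \<open>E_\<Pi> E_\<xi> S_t^4 = 3 t (t - 1) m2^2 + t m4 = O(t^2)\<close>,
  with \<open>mk\<close> the \<open>k\<close>-th moment of \<open>f\<close> under \<open>P0\<close>; hence \<open>\<Sum>t. E_\<xi> (S_t / t)^4 < \<infinity>\<close> for \<open>\<Pi>\<close>-almost every \<open>\<xi>\<close>, and then \<open>S_t / t \<longrightarrow> 0\<close>
  almost surely under \<open>P_\<xi>\<close>. Applied to \<open>f u = (u_i - b_i) (u_j - b_j) - \<eta>^2_ij\<close> this is the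
  theorem, entry by entry.\<close>

section \<open>Walks driven by step sequences\<close>

definition step_seqs :: "'a set \<Rightarrow> nat \<Rightarrow> (nat \<Rightarrow> 'a) set" where
  "step_seqs U t = PiE {..<t} (\<lambda>_. U)"

definition walk_path :: "'a::comm_monoid_add \<Rightarrow> (nat \<Rightarrow> 'a) \<Rightarrow> nat \<Rightarrow> 'a" where
  "walk_path x0 us s = x0 + (\<Sum>r<s. us r)"

lemma walk_path_0 [simp]: "walk_path x0 us 0 = x0"
  by (simp add: walk_path_def)

lemma walk_path_Suc: "walk_path x0 us (Suc r) = walk_path x0 us r + us r"
  by (simp add: walk_path_def add.assoc)

lemma walk_path_fun_upd: "r \<le> t \<Longrightarrow> walk_path x0 (us(t := u)) r = walk_path x0 us r"
  unfolding walk_path_def by (intro arg_cong[where f="\<lambda>z. x0 + z"] sum.cong) auto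

lemma finite_step_seqs: "finite U \<Longrightarrow> finite (step_seqs U t)"
  unfolding step_seqs_def by (intro finite_PiE) auto

lemma sum_step_seqs_Suc:
  assumes "finite U"
  shows "(\<Sum>us\<in>step_seqs U (Suc t). G us) = (\<Sum>us\<in>step_seqs U t. \<Sum>u\<in>U. G (us(t := u)))"
proof -
  have "step_seqs U (Suc t) = (\<lambda>(u, us). us(t := u)) ` (U \<times> step_seqs U t)"
    by (simp add: step_seqs_def lessThan_Suc PiE_insert_eq)
  moreover have "inj_on (\<lambda>(u, us). us(t := u)) (U \<times> step_seqs U t)"
    unfolding step_seqs_def by (rule inj_combinator) simp
  ultimately have "(\<Sum>us\<in>step_seqs U (Suc t). G us) = (\<Sum>(u, us)\<in>U \<times> step_seqs U t. G (us(t := u)))"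
    by (simp add: sum.reindex case_prod_unfold)
  also have "\<dots> = (\<Sum>us\<in>step_seqs U t. \<Sum>u\<in>U. G (us(t := u)))"
    by (simp add: sum.cartesian_product[symmetric] sum.swap[of _ U])
  finally show ?thesis .
qed

lemma step_seqs_eq_if_walk_path_eq:
  fixes us us' :: "nat \<Rightarrow> 'a::ab_group_add"
  assumes "us \<in> step_seqs U t" "us' \<in> step_seqs U t"
    and "\<And>s. s \<le> t \<Longrightarrow> walk_path x0 us s = walk_path x0 us' s"
  shows "us = us'"
proof
  fix r
  show "us r = us' r"
  proof (cases "r < t")
    case True
    then show ?thesis
      using assms(3)[of r] assms(3)[of "Suc r"] by (simp add: walk_path_Suc)
  next
    case False
    then show ?thesis using assms(1,2) by (auto simp: step_seqs_def PiE_def extensional_def)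
  qed
qed

section \<open>Moments of sums of i.i.d. steps\<close>

definition step_sum_moment :: "'a set \<Rightarrow> ('a \<Rightarrow> real) \<Rightarrow> ('a \<Rightarrow> real) \<Rightarrow> nat \<Rightarrow> nat \<Rightarrow> real" where
  "step_sum_moment U p f k t = (\<Sum>us\<in>step_seqs U t. (\<Sum>r<t. f (us r)) ^ k * (\<Prod>r<t. p (us r)))"

lemma step_sum_moment_0: "step_sum_moment U p f k 0 = 0 ^ k"
  by (simp add: step_sum_moment_def step_seqs_def)

lemma step_sum_moment_Suc:
  assumes "finite U"
  shows "step_sum_moment U p f k (Suc t) =
    (\<Sum>j\<le>k. real (k choose j) * (step_sum_moment U p f j t * (\<Sum>u\<in>U. f u ^ (k - j) * p u)))"
proof -
  have "(\<Sum>r<t. f ((us(t := u)) r)) = (\<Sum>r<t. f (us r))"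
    "(\<Prod>r<t. p ((us(t := u)) r)) = (\<Prod>r<t. p (us r))" for us u
    by (auto intro: sum.cong prod.cong)
  then have upd: "(\<Sum>r<Suc t. f ((us(t := u)) r)) = (\<Sum>r<t. f (us r)) + f u"
    "(\<Prod>r<Suc t. p ((us(t := u)) r)) = (\<Prod>r<t. p (us r)) * p u" for us u
    by simp_all
  have "step_sum_moment U p f k (Suc t) = (\<Sum>us\<in>step_seqs U t. \<Sum>u\<in>U.
      ((\<Sum>r<t. f (us r)) + f u) ^ k * ((\<Prod>r<t. p (us r)) * p u))"
    unfolding step_sum_moment_def sum_step_seqs_Suc[OF assms] upd ..
  also have "\<dots> = (\<Sum>us\<in>step_seqs U t. \<Sum>u\<in>U. \<Sum>j\<le>k.
      real (k choose j) * ((\<Sum>r<t. f (us r)) ^ j * (\<Prod>r<t. p (us r))) * (f u ^ (k - j) * p u))"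
    by (simp add: binomial_ring sum_distrib_left sum_distrib_right mult_ac)
  also have "\<dots> = (\<Sum>j\<le>k. \<Sum>us\<in>step_seqs U t. \<Sum>u\<in>U.
      real (k choose j) * ((\<Sum>r<t. f (us r)) ^ j * (\<Prod>r<t. p (us r))) * (f u ^ (k - j) * p u))"
    by (simp only: sum.swap[of _ U "{..k}"] sum.swap[of _ "step_seqs U t" "{..k}"])
  also have "\<dots> = (\<Sum>j\<le>k. real (k choose j) * (step_sum_moment U p f j t * (\<Sum>u\<in>U. f u ^ (k - j) * p u)))"
    by (simp add: step_sum_moment_def sum_distrib_left sum_distrib_right sum.swap[of _ U "step_seqs U t"] mult_ac)
  finally show ?thesis .
qed

context
  fixes U :: "'a set" and p f :: "'a \<Rightarrow> real"
  assumes finite: "finite U" and total: "(\<Sum>u\<in>U. p u) = 1" and centred: "(\<Sum>u\<in>U. f u * p u) = 0"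
begin

lemma step_sum_moment_zero: "step_sum_moment U p f 0 t = 1"
  by (induction t) (simp_all add: step_sum_moment_0 step_sum_moment_Suc[OF finite] total)

lemma step_sum_moment_one: "step_sum_moment U p f 1 t = 0"
  by (induction t)
    (simp_all add: step_sum_moment_0 step_sum_moment_Suc[OF finite] total centred step_sum_moment_zero)

lemma step_sum_moment_two: "step_sum_moment U p f 2 t = real t * (\<Sum>u\<in>U. f u ^ 2 * p u)"
proof (induction t)
  case (Suc t)
  have expand: "(\<Sum>j\<le>2. real (2 choose j) * h j) = h 0 + 2 * h 1 + h 2" for h :: "nat \<Rightarrow> real"
    by (simp add: numeral_eq_Suc atMost_Suc)
  show ?case
    unfolding step_sum_moment_Suc[OF finite] expand
    by (simp add: Suc total centred step_sum_moment_zero step_sum_moment_one algebra_simps)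
qed (simp add: step_sum_moment_0)

lemma step_sum_moment_four:
  "step_sum_moment U p f 4 t =
     3 * real t * (real t - 1) * (\<Sum>u\<in>U. f u ^ 2 * p u) ^ 2 + real t * (\<Sum>u\<in>U. f u ^ 4 * p u)"
proof (induction t)
  case (Suc t)
  have expand: "(\<Sum>j\<le>4. real (4 choose j) * h j) = h 0 + 4 * h 1 + 6 * h 2 + 4 * h 3 + h 4"
    for h :: "nat \<Rightarrow> real"
    by (simp add: numeral_eq_Suc atMost_Suc)
  show ?case
    unfolding step_sum_moment_Suc[OF finite] expand
    by (simp add: Suc total centred step_sum_moment_zero
        step_sum_moment_one[unfolded One_nat_def] step_sum_moment_two power2_eq_square algebra_simps)
qed (simp add: step_sum_moment_0)

lemma step_sum_moment_four_le:
  "step_sum_moment U p f 4 t \<le>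
     (3 * (\<Sum>u\<in>U. f u ^ 2 * p u) ^ 2 + \<bar>\<Sum>u\<in>U. f u ^ 4 * p u\<bar>) * real t ^ 2"
proof -
  define m2 m4 where "m2 = (\<Sum>u\<in>U. f u ^ 2 * p u)" and "m4 = (\<Sum>u\<in>U. f u ^ 4 * p u)"
  have "real t * (real t - 1) \<le> real t ^ 2"
    by (simp add: power2_eq_square algebra_simps)
  from mult_right_mono[OF this zero_le_power2[of m2]]
  have "real t * (real t - 1) * m2 ^ 2 \<le> real t ^ 2 * m2 ^ 2" .
  moreover have "real t \<le> real t ^ 2"
    using le_square[of t] by (metis of_nat_le_iff of_nat_mult power2_eq_square)
  from mult_right_mono[OF this abs_ge_zero[of m4]]
  have "real t * m4 \<le> real t ^ 2 * \<bar>m4\<bar>"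
    using mult_left_mono[OF abs_ge_self[of m4], of "real t"] by linarith
  ultimately show ?thesis
    unfolding step_sum_moment_four m2_def[symmetric] m4_def[symmetric] by (simp add: algebra_simps)
qed

end

lemma product_prob_space_measure_pmf: "product_prob_space (\<lambda>_. measure_pmf \<pi>)"
  by (simp add: product_prob_space_def product_prob_space_axioms_def product_sigma_finite_def
      prob_space_measure_pmf prob_space_imp_sigma_finite)

lemma measurable_PiM_pmf_coordinate:
  "j \<in> J \<Longrightarrow> (\<lambda>\<xi>. h (\<xi> j)) \<in> borel_measurable (PiM J (\<lambda>_. measure_pmf \<pi>))"
  by (rule measurable_compose[OF measurable_component_singleton[where M="\<lambda>_. measure_pmf \<pi>"]])
    (simp_all add: measurable_cong_sets[OF sets_measure_pmf_count_space refl])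

lemma integral_PiM_pmf_coordinate:
  fixes \<pi> :: "'a::finite pmf" and h :: "'a \<Rightarrow> real"
  shows "(\<integral>\<xi>. h (\<xi> j) \<partial>PiM UNIV (\<lambda>_. measure_pmf \<pi>)) = (\<Sum>s\<in>UNIV. pmf \<pi> s * h s)"
proof -
  interpret product_prob_space "\<lambda>_. measure_pmf \<pi>" UNIV
    by (rule product_prob_space_measure_pmf)
  have "(\<integral>\<xi>. h (\<xi> j) \<partial>PiM UNIV (\<lambda>_. measure_pmf \<pi>)) =
      (\<integral>s. h s \<partial>distr (PiM UNIV (\<lambda>_. measure_pmf \<pi>)) (measure_pmf \<pi>) (\<lambda>\<xi>. \<xi> j))"
    by (rule integral_distr[symmetric])
      (simp_all add: measurable_cong_sets[OF sets_measure_pmf_count_space refl])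
  also have "\<dots> = (\<integral>s. h s \<partial>measure_pmf \<pi>)"
    by (simp add: PiM_component)
  also have "\<dots> = (\<Sum>s\<in>UNIV. pmf \<pi> s * h s)"
    by (subst integral_measure_pmf[of UNIV]) auto
  finally show ?thesis .
qed

lemma integral_PiM_pmf_restrict_times_coordinate:
  fixes \<pi> :: "'a::finite pmf" and h :: "'a \<Rightarrow> real"
  assumes j: "j \<notin> J"
    and F_measurable: "F \<in> borel_measurable (PiM J (\<lambda>_. measure_pmf \<pi>))"
    and F_bounded: "\<And>\<eta>. \<bar>F \<eta>\<bar> \<le> B"
  shows "(\<integral>\<xi>. F (restrict \<xi> J) * h (\<xi> j) \<partial>PiM UNIV (\<lambda>_. measure_pmf \<pi>)) =
     (\<integral>\<xi>. F (restrict \<xi> J) \<partial>PiM UNIV (\<lambda>_. measure_pmf \<pi>)) * (\<Sum>s\<in>UNIV. pmf \<pi> s * h s)"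
proof -
  let ?P = "PiM UNIV (\<lambda>_. measure_pmf \<pi>) :: ('i \<Rightarrow> 'a) measure"
  interpret product_prob_space "\<lambda>_. measure_pmf \<pi>" UNIV
    by (rule product_prob_space_measure_pmf)
  have coordinates: "P.indep_vars (\<lambda>_. measure_pmf \<pi>) (\<lambda>i \<xi>. \<xi> i) UNIV"
    by (subst P.indep_vars_iff_distr_eq_PiM)
      (simp_all add: restrict_UNIV PiM_component measurable_component_singleton)
  have "P.indep_var (PiM J (\<lambda>_. measure_pmf \<pi>)) (\<lambda>\<xi>. restrict \<xi> J)
      (PiM {j} (\<lambda>_. measure_pmf \<pi>)) (\<lambda>\<xi>. restrict \<xi> {j})"
    using P.indep_var_restrict[OF coordinates, of J "{j}"] j by simp
  from P.indep_var_compose[OF this F_measurable measurable_PiM_pmf_coordinate[of j "{j}" h]]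
  have "P.indep_var borel (\<lambda>\<xi>. F (restrict \<xi> J)) borel (\<lambda>\<xi>. h (\<xi> j))"
    by (simp add: comp_def)
  moreover have "integrable ?P (\<lambda>\<xi>. F (restrict \<xi> J))"
    using F_bounded measurable_compose[OF measurable_restrict_subset F_measurable]
    by (intro P.integrable_const_bound[where B=B]) auto
  moreover have "integrable ?P (\<lambda>\<xi>. h (\<xi> j))"
    using measurable_PiM_pmf_coordinate[of j UNIV h]
    by (intro P.integrable_const_bound[where B="\<Sum>s\<in>UNIV. \<bar>h s\<bar>"]) (auto intro!: member_le_sum)
  ultimately show ?thesis
    by (simp add: P.indep_var_lebesgue_integral integral_PiM_pmf_coordinate)
qed

lemma AE_summable_if_summable_nn_integral:
  fixes g :: "nat \<Rightarrow> 'a \<Rightarrow> real"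
  assumes measurable: "\<And>t. g t \<in> borel_measurable M" and nonneg: "\<And>t \<omega>. 0 \<le> g t \<omega>"
    and bound: "\<And>t. (\<integral>\<^sup>+\<omega>. ennreal (g t \<omega>) \<partial>M) \<le> ennreal (b t)"
    and "summable b" and "\<And>t. 0 \<le> b t"
  shows "AE \<omega> in M. summable (\<lambda>t. g t \<omega>)"
proof -
  have "(\<integral>\<^sup>+\<omega>. (\<Sum>t. ennreal (g t \<omega>)) \<partial>M) = (\<Sum>t. \<integral>\<^sup>+\<omega>. ennreal (g t \<omega>) \<partial>M)"
    using measurable by (intro nn_integral_suminf) measurable
  also have "\<dots> \<le> (\<Sum>t. ennreal (b t))"
    by (intro suminf_le bound) auto
  also have "\<dots> = ennreal (suminf b)"
    using assms(4,5) by (intro suminf_ennreal2)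
  finally have "(\<integral>\<^sup>+\<omega>. (\<Sum>t. ennreal (g t \<omega>)) \<partial>M) \<noteq> \<infinity>"
    unfolding infinity_ennreal_def by (rule neq_top_trans[OF ennreal_neq_top])
  then have "AE \<omega> in M. (\<Sum>t. ennreal (g t \<omega>)) \<noteq> \<infinity>"
    using measurable by (intro nn_integral_PInf_AE) measurable
  then show ?thesis
    by eventually_elim (rule summable_suminf_not_top[OF nonneg], simp)
qed

section \<open>The walk in a dynamic random environment\<close>

definition increment_sum :: "('a::minus \<Rightarrow> real) \<Rightarrow> (nat \<Rightarrow> 'w \<Rightarrow> 'a) \<Rightarrow> nat \<Rightarrow> 'w \<Rightarrow> real" where
  "increment_sum f X t \<omega> = (\<Sum>r<t. f (X (Suc r) \<omega> - X r \<omega>))"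

lemma quad_var_eq_increment_sum:
  "quad_var b X t \<omega> $ i $ j =
    increment_sum (\<lambda>u. (real_of_int (u $ i) - b $ i) * (real_of_int (u $ j) - b $ j)) X t \<omega>"
  unfolding quad_var_def increment_sum_def by (simp add: algebra_simps)

lemma quad_var_average_tendsto:
  assumes "\<And>i j. (\<lambda>t. increment_sum (\<lambda>u. (real_of_int (u $ i) - b $ i) * (real_of_int (u $ j) - b $ j)
      - m i j) X t \<omega> / real t) \<longlonglongrightarrow> 0"
  shows "(\<lambda>t. (1 / real t) *\<^sub>R quad_var b X t \<omega>) \<longlonglongrightarrow> (\<chi> i j. m i j)"
proof (intro vec_tendstoI)
  fix i j
  let ?S = "\<lambda>t. increment_sum (\<lambda>u. (real_of_int (u $ i) - b $ i) * (real_of_int (u $ j) - b $ j)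
      - m i j) X t \<omega>"
  have "?S t = quad_var b X t \<omega> $ i $ j - real t * m i j" for t
    by (simp add: quad_var_eq_increment_sum increment_sum_def sum_subtractf)
  then have "((1 / real t) *\<^sub>R quad_var b X t \<omega>) $ i $ j = ?S t / real t + m i j" if "t > 0" for t
    using that by (simp add: field_simps)
  then have "\<forall>\<^sub>F t in sequentially. ((1 / real t) *\<^sub>R quad_var b X t \<omega>) $ i $ j = ?S t / real t + m i j"
    by (simp add: eventually_at_top_dense)
  with tendsto_add[OF assms tendsto_const[of "m i j"]]
  show "(\<lambda>t. ((1 / real t) *\<^sub>R quad_var b X t \<omega>) $ i $ j) \<longlonglongrightarrow> (\<chi> i j. m i j) $ i $ j"
    by (simp add: tendsto_cong)
qed

locale walk_in_dynamic_env =
  fixes \<pi> :: "'S::finite pmf" and P0 :: "int^'n \<Rightarrow> real" and c :: "int^'n \<Rightarrow> 'S \<Rightarrow> real"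
    and U :: "(int^'n) set" and x0 :: "int^'n"
  assumes finite_steps: "finite U"
    and sum_P0: "(\<Sum>u\<in>U. P0 u) = 1"
    and sum_c: "\<And>s. (\<Sum>u\<in>U. c u s) = 0"
    and step_prob_nonneg: "\<And>u s. 0 \<le> P0 u + c u s"
    and step_prob_le_1: "\<And>u s. P0 u + c u s \<le> 1"
    and c_mean_zero: "\<And>u. (\<Sum>s\<in>UNIV. c u s * pmf \<pi> s) = 0"
begin

abbreviation env :: "(nat \<times> (int^'n) \<Rightarrow> 'S) measure" where
  "env \<equiv> env_law \<pi>"

definition path_weight :: "(nat \<times> (int^'n) \<Rightarrow> 'S) \<Rightarrow> nat \<Rightarrow> (nat \<Rightarrow> int^'n) \<Rightarrow> real" where
  "path_weight \<xi> t us = (\<Prod>r<t. P0 (us r) + c (us r) (\<xi> (r, walk_path x0 us r)))"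

definition quenched_moment :: "(int^'n \<Rightarrow> real) \<Rightarrow> nat \<Rightarrow> (nat \<times> (int^'n) \<Rightarrow> 'S) \<Rightarrow> nat \<Rightarrow> real" where
  "quenched_moment f k \<xi> t = (\<Sum>us\<in>step_seqs U t. (\<Sum>r<t. f (us r)) ^ k * path_weight \<xi> t us)"

lemma prob_space_env: "prob_space env"
  unfolding env_law_def by (intro prob_space_PiM prob_space_measure_pmf)

lemma path_weight_nonneg: "0 \<le> path_weight \<xi> t us"
  unfolding path_weight_def by (intro prod_nonneg step_prob_nonneg)

lemma path_weight_le_1: "path_weight \<xi> t us \<le> 1"
  unfolding path_weight_def by (intro prod_le_1) (simp add: step_prob_nonneg step_prob_le_1)

lemma path_weight_Suc:
  "path_weight \<xi> (Suc t) us = path_weight \<xi> t us * (P0 (us t) + c (us t) (\<xi> (t, walk_path x0 us t)))"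
  by (simp add: path_weight_def)

lemma path_weight_fun_upd: "path_weight \<xi> t (us(t := u)) = path_weight \<xi> t us"
  unfolding path_weight_def by (intro prod.cong) (auto simp: walk_path_fun_upd)

lemma sum_path_weight: "(\<Sum>us\<in>step_seqs U t. path_weight \<xi> t us) = 1"
proof (induction t)
  case (Suc t)
  have "(\<Sum>us\<in>step_seqs U (Suc t). path_weight \<xi> (Suc t) us) =
      (\<Sum>us\<in>step_seqs U t. path_weight \<xi> t us * (\<Sum>u\<in>U. P0 u + c u (\<xi> (t, walk_path x0 us t))))"
    by (simp add: sum_step_seqs_Suc[OF finite_steps] path_weight_Suc path_weight_fun_upd
        walk_path_fun_upd sum_distrib_left)
  then show ?case
    by (simp add: sum.distrib sum_P0 sum_c Suc)
qed (simp add: path_weight_def step_seqs_def)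

lemma path_weight_measurable: "(\<lambda>\<xi>. path_weight \<xi> t us) \<in> borel_measurable env"
  unfolding path_weight_def env_law_def
  by (intro borel_measurable_prod measurable_PiM_pmf_coordinate) simp

lemma integrable_path_weight: "integrable env (\<lambda>\<xi>. path_weight \<xi> t us)"
proof -
  interpret prob_space env
    by (rule prob_space_env)
  show ?thesis
    using path_weight_measurable path_weight_nonneg path_weight_le_1
    by (intro integrable_const_bound[where B=1]) auto
qed

lemma integral_path_weight: "(\<integral>\<xi>. path_weight \<xi> t us \<partial>env) = (\<Prod>r<t. P0 (us r))"
proof (induction t)
  case 0
  then show ?case
    by (simp add: path_weight_def prob_space.prob_space[OF prob_space_env])
next
  case (Suc t)
  define J where "J = (\<lambda>r. (r, walk_path x0 us r)) ` {..<t}"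
  define F where "F \<eta> = (\<Prod>r<t. P0 (us r) + c (us r) (\<eta> (r, walk_path x0 us r)))" for \<eta>
  have weight: "path_weight \<xi> t us = F (restrict \<xi> J)" for \<xi>
    unfolding path_weight_def F_def J_def by (intro prod.cong) auto
  have "(t, walk_path x0 us t) \<notin> J"
    unfolding J_def by auto
  moreover have "F \<in> borel_measurable (PiM J (\<lambda>_. measure_pmf \<pi>))"
    unfolding F_def J_def by (intro borel_measurable_prod measurable_PiM_pmf_coordinate) simp
  moreover have "\<bar>F \<eta>\<bar> \<le> 1" for \<eta>
    using path_weight_nonneg[of "\<lambda>i. \<eta> i"] path_weight_le_1[of "\<lambda>i. \<eta> i"]
    unfolding path_weight_def F_def by (simp add: abs_le_iff)
  ultimately have "(\<integral>\<xi>. path_weight \<xi> (Suc t) us \<partial>env) =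
      (\<integral>\<xi>. path_weight \<xi> t us \<partial>env) * (\<Sum>s\<in>UNIV. pmf \<pi> s * (P0 (us t) + c (us t) s))"
    unfolding path_weight_Suc weight env_law_def
    by (rule integral_PiM_pmf_restrict_times_coordinate[where h="\<lambda>s. P0 (us t) + c (us t) s"])
  also have "(\<Sum>s\<in>UNIV. pmf \<pi> s * (P0 (us t) + c (us t) s)) =
      P0 (us t) * (\<Sum>s\<in>UNIV. pmf \<pi> s) + (\<Sum>s\<in>UNIV. c (us t) s * pmf \<pi> s)"
    by (simp add: algebra_simps sum.distrib sum_distrib_left)
  also have "\<dots> = P0 (us t)"
    by (simp add: sum_pmf_eq_1 c_mean_zero)
  finally show ?case
    by (simp add: Suc)
qed

lemma integral_quenched_moment:
  "(\<integral>\<xi>. quenched_moment f k \<xi> t \<partial>env) = step_sum_moment U P0 f k t"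
  unfolding quenched_moment_def step_sum_moment_def
  by (simp add: integrable_path_weight integral_path_weight)

lemma AE_summable_quenched_moment:
  assumes centred: "(\<Sum>u\<in>U. f u * P0 u) = 0"
  shows "AE \<xi> in env. summable (\<lambda>t. quenched_moment f 4 \<xi> t / real t ^ 4)"
proof (rule AE_summable_if_summable_nn_integral)
  define C where "C = 3 * (\<Sum>u\<in>U. f u ^ 2 * P0 u) ^ 2 + \<bar>\<Sum>u\<in>U. f u ^ 4 * P0 u\<bar>"
  show "summable (\<lambda>t. C / real t ^ 2)"
    using inverse_power_summable[of 2, where 'a=real] by (simp add: divide_inverse summable_mult)
  show "0 \<le> C / real t ^ 2" for t
    by (simp add: C_def)
  have moment_nonneg: "0 \<le> quenched_moment f 4 \<xi> t" for \<xi> t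
    unfolding quenched_moment_def by (intro sum_nonneg mult_nonneg_nonneg path_weight_nonneg) simp
  then show "0 \<le> quenched_moment f 4 \<xi> t / real t ^ 4" for \<xi> t
    by simp
  have "(\<lambda>\<xi>. quenched_moment f 4 \<xi> t) \<in> borel_measurable env" for t
    unfolding quenched_moment_def by (intro borel_measurable_sum borel_measurable_times
        path_weight_measurable borel_measurable_const)
  then show "(\<lambda>\<xi>. quenched_moment f 4 \<xi> t / real t ^ 4) \<in> borel_measurable env" for t
    by measurable
  show "(\<integral>\<^sup>+\<xi>. ennreal (quenched_moment f 4 \<xi> t / real t ^ 4) \<partial>env) \<le> ennreal (C / real t ^ 2)"
    for t
  proof -
    have "step_sum_moment U P0 f 4 t / real t ^ 4 \<le> C / real t ^ 2"
      using step_sum_moment_four_le[OF finite_steps sum_P0 centred, of t]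
      by (cases "t = 0") (simp_all add: C_def field_simps power_add[symmetric] eval_nat_numeral)
    moreover have "integrable env (\<lambda>\<xi>. quenched_moment f 4 \<xi> t)"
      unfolding quenched_moment_def by (simp add: integrable_path_weight)
    ultimately show ?thesis
      using moment_nonneg
      by (simp add: nn_integral_eq_integral integral_quenched_moment ennreal_leI)
  qed
qed

definition path_event :: "'w measure \<Rightarrow> (nat \<Rightarrow> 'w \<Rightarrow> int^'n) \<Rightarrow> nat \<Rightarrow> (nat \<Rightarrow> int^'n) \<Rightarrow> 'w set"
  where "path_event M X t us = {\<omega> \<in> space M. \<forall>s\<le>t. X s \<omega> = walk_path x0 us s}"

lemma path_event_unique:
  assumes "us \<in> step_seqs U t" "us' \<in> step_seqs U t"
    and "\<omega> \<in> path_event M X t us" "\<omega> \<in> path_event M X t us'"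
  shows "us = us'"
  using assms by (intro step_seqs_eq_if_walk_path_eq[of us U t us' x0]) (auto simp: path_event_def)

lemma increment_sum_path_event:
  "\<omega> \<in> path_event M X t us \<Longrightarrow> increment_sum f X t \<omega> = (\<Sum>r<t. f (us r))"
  unfolding increment_sum_def path_event_def by (intro sum.cong) (auto simp: walk_path_Suc)

context
  fixes \<xi> :: "nat \<times> (int^'n) \<Rightarrow> 'S" and M :: "'w measure" and X :: "nat \<Rightarrow> 'w \<Rightarrow> int^'n"
  assumes chain: "quenched_chain P0 c \<xi> x0 M X"
begin

interpretation M: prob_space M
  using chain by (simp add: quenched_chain_def)

lemma measurable_chain [measurable]: "X s \<in> M \<rightarrow>\<^sub>M count_space UNIV"
  using chain by (simp add: quenched_chain_def)

lemma sets_path_event [measurable]: "path_event M X t us \<in> sets M"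
proof -
  have "path_event M X t us = space M \<inter> (\<Inter>s\<le>t. {\<omega> \<in> space M. X s \<omega> = walk_path x0 us s})"
    unfolding path_event_def by auto
  also have "\<dots> \<in> sets M"
    by measurable
  finally show ?thesis .
qed

lemma measure_path_event: "measure M (path_event M X t us) = path_weight \<xi> t us"
proof (induction t)
  case 0
  have "path_event M X 0 us = {\<omega> \<in> space M. X 0 \<omega> = x0}"
    unfolding path_event_def by auto
  then show ?case
    using chain by (simp add: quenched_chain_def path_weight_def)
next
  case (Suc t)
  have "measure M (path_event M X (Suc t) us) =
      measure M (path_event M X t us) * trans_prob P0 c \<xi> t (walk_path x0 us t) (walk_path x0 us (Suc t))"
    using chain unfolding quenched_chain_def path_event_def by blast
  then show ?case
    by (simp add: Suc path_weight_Suc trans_prob_def walk_path_Suc)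
qed

lemma AE_path_event: "AE \<omega> in M. \<exists>us\<in>step_seqs U t. \<omega> \<in> path_event M X t us"
proof -
  have "M.prob (\<Union>us\<in>step_seqs U t. path_event M X t us) = (\<Sum>us\<in>step_seqs U t. M.prob (path_event M X t us))"
  proof (intro M.finite_measure_finite_Union finite_step_seqs finite_steps)
    show "disjoint_family_on (path_event M X t) (step_seqs U t)"
      unfolding disjoint_family_on_def by (auto dest: path_event_unique[of _ t _ _ M X])
  qed auto
  also have "\<dots> = 1"
    by (simp add: measure_path_event sum_path_weight)
  finally have "AE \<omega> in M. \<omega> \<in> (\<Union>us\<in>step_seqs U t. path_event M X t us)"
    by (subst M.AE_in_set_eq_1) (auto intro!: sets.finite_UN finite_step_seqs finite_steps)
  then show ?thesis
    by auto
qed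

lemma nn_integral_increment_sum:
  assumes "\<And>x. 0 \<le> g x"
  shows "(\<integral>\<^sup>+\<omega>. ennreal (g (increment_sum f X t \<omega>)) \<partial>M) =
    ennreal (\<Sum>us\<in>step_seqs U t. g (\<Sum>r<t. f (us r)) * path_weight \<xi> t us)"
proof -
  have "AE \<omega> in M. ennreal (g (increment_sum f X t \<omega>)) =
      (\<Sum>us\<in>step_seqs U t. ennreal (g (\<Sum>r<t. f (us r))) * indicator (path_event M X t us) \<omega>)"
    using AE_path_event[of t]
  proof eventually_elim
    case (elim \<omega>)
    then obtain us0 where us0: "us0 \<in> step_seqs U t" "\<omega> \<in> path_event M X t us0"
      by blast
    have "(\<Sum>us\<in>step_seqs U t. ennreal (g (\<Sum>r<t. f (us r))) * indicator (path_event M X t us) \<omega>) =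
        (\<Sum>us\<in>step_seqs U t. if us = us0 then ennreal (g (\<Sum>r<t. f (us0 r))) else 0)"
    proof (intro sum.cong refl)
      fix us assume "us \<in> step_seqs U t"
      then have "\<omega> \<in> path_event M X t us \<longleftrightarrow> us = us0"
        using path_event_unique[of us t us0 \<omega> M X] us0 by blast
      then show "ennreal (g (\<Sum>r<t. f (us r))) * indicator (path_event M X t us) \<omega> =
          (if us = us0 then ennreal (g (\<Sum>r<t. f (us0 r))) else 0)"
        by (simp add: indicator_def)
    qed
    also have "\<dots> = ennreal (g (increment_sum f X t \<omega>))"
      using us0 by (simp add: finite_step_seqs finite_steps increment_sum_path_event)
    finally show ?case ..
  qed
  then have "(\<integral>\<^sup>+\<omega>. ennreal (g (increment_sum f X t \<omega>)) \<partial>M) =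
      (\<Sum>us\<in>step_seqs U t. ennreal (g (\<Sum>r<t. f (us r))) * emeasure M (path_event M X t us))"
    by (simp add: nn_integral_cong_AE nn_integral_sum nn_integral_cmult_indicator)
  also have "\<dots> = (\<Sum>us\<in>step_seqs U t. ennreal (g (\<Sum>r<t. f (us r)) * path_weight \<xi> t us))"
    using assms by (simp add: M.emeasure_eq_measure measure_path_event path_weight_nonneg ennreal_mult)
  also have "\<dots> = ennreal (\<Sum>us\<in>step_seqs U t. g (\<Sum>r<t. f (us r)) * path_weight \<xi> t us)"
    using assms by (intro sum_ennreal mult_nonneg_nonneg path_weight_nonneg)
  finally show ?thesis .
qed

lemma AE_increment_sum_average_tendsto_0:
  assumes "summable (\<lambda>t. quenched_moment f 4 \<xi> t / real t ^ 4)"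
  shows "AE \<omega> in M. (\<lambda>t. increment_sum f X t \<omega> / real t) \<longlonglongrightarrow> 0"
proof -
  have "AE \<omega> in M. summable (\<lambda>t. (increment_sum f X t \<omega> / real t) ^ 4)"
  proof (rule AE_summable_if_summable_nn_integral[OF _ _ _ assms])
    show "(\<lambda>\<omega>. (increment_sum f X t \<omega> / real t) ^ 4) \<in> borel_measurable M" for t
      unfolding increment_sum_def by measurable
    show "(\<integral>\<^sup>+\<omega>. ennreal ((increment_sum f X t \<omega> / real t) ^ 4) \<partial>M) \<le>
        ennreal (quenched_moment f 4 \<xi> t / real t ^ 4)" for t
    proof -
      have "(\<integral>\<^sup>+\<omega>. ennreal ((increment_sum f X t \<omega> / real t) ^ 4) \<partial>M) =
          ennreal (\<Sum>us\<in>step_seqs U t. ((\<Sum>r<t. f (us r)) / real t) ^ 4 * path_weight \<xi> t us)"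
        by (rule nn_integral_increment_sum) simp
      also have "\<dots> = ennreal (quenched_moment f 4 \<xi> t / real t ^ 4)"
        by (simp add: quenched_moment_def power_divide sum_divide_distrib[of _ _ "real t ^ 4"])
      finally show ?thesis
        by simp
    qed
    show "0 \<le> quenched_moment f 4 \<xi> t / real t ^ 4" for t
      unfolding quenched_moment_def by (intro divide_nonneg_nonneg sum_nonneg mult_nonneg_nonneg
          path_weight_nonneg) simp_all
  qed simp
  then show ?thesis
  proof eventually_elim
    case (elim \<omega>)
    have "(\<lambda>t. root 4 ((increment_sum f X t \<omega> / real t) ^ 4)) \<longlonglongrightarrow> root 4 0"
      using elim by (intro tendsto_real_root summable_LIMSEQ_zero)
    moreover have "root 4 (x ^ 4) = \<bar>x\<bar>" for x :: real
      by (rule real_root_pos_unique) (auto simp: power_even_abs)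
    ultimately have "(\<lambda>t. \<bar>increment_sum f X t \<omega> / real t\<bar>) \<longlonglongrightarrow> 0"
      by (simp only: real_root_zero)
    then show ?case
      by (simp only: tendsto_rabs_zero_iff)
  qed
qed

end

lemma AE_env_increment_sum_average_tendsto_0:
  assumes "(\<Sum>u\<in>U. f u * P0 u) = 0"
  shows "AE \<xi> in env. \<forall>(M :: 'w measure) X. quenched_chain P0 c \<xi> x0 M X \<longrightarrow>
    (AE \<omega> in M. (\<lambda>t. increment_sum f X t \<omega> / real t) \<longlonglongrightarrow> 0)"
  using AE_summable_quenched_moment[OF assms]
  by eventually_elim (blast intro: AE_increment_sum_average_tendsto_0)

lemma AE_env_quad_var_average_tendsto:
  fixes b :: "real^'n"
  shows "AE \<xi> in env. \<forall>(M :: 'w measure) X. quenched_chain P0 c \<xi> x0 M X \<longrightarrow>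
    (AE \<omega> in M. (\<lambda>t. (1 / real t) *\<^sub>R quad_var b X t \<omega>) \<longlonglongrightarrow>
      (\<chi> i j. \<Sum>u\<in>U. (real_of_int (u $ i) - b $ i) * (real_of_int (u $ j) - b $ j) * P0 u))"
proof -
  define \<phi> where "\<phi> i j u = (real_of_int (u $ i) - b $ i) * (real_of_int (u $ j) - b $ j)" for i j u
  define m where "m i j = (\<Sum>u\<in>U. \<phi> i j u * P0 u)" for i j
  have "(\<Sum>u\<in>U. (\<phi> i j u - m i j) * P0 u) = 0" for i j
    by (simp add: m_def left_diff_distrib sum_subtractf sum_distrib_left[symmetric] sum_P0)
  then have "AE \<xi> in env. \<forall>i\<in>UNIV. \<forall>j\<in>UNIV. \<forall>(M :: 'w measure) X. quenched_chain P0 c \<xi> x0 M X \<longrightarrow>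
      (AE \<omega> in M. (\<lambda>t. increment_sum (\<lambda>u. \<phi> i j u - m i j) X t \<omega> / real t) \<longlonglongrightarrow> 0)"
    by (intro AE_finite_allI AE_env_increment_sum_average_tendsto_0) simp_all
  then show ?thesis
    unfolding \<phi>_def[symmetric] m_def[symmetric]
  proof (eventually_elim, intro allI impI)
    fix \<xi> and M :: "'w measure" and X
    assume "\<forall>i\<in>UNIV. \<forall>j\<in>UNIV. \<forall>(M :: 'w measure) X. quenched_chain P0 c \<xi> x0 M X \<longrightarrow>
      (AE \<omega> in M. (\<lambda>t. increment_sum (\<lambda>u. \<phi> i j u - m i j) X t \<omega> / real t) \<longlonglongrightarrow> 0)"
      and "quenched_chain P0 c \<xi> x0 M X"
    then have "AE \<omega> in M. \<forall>i\<in>UNIV. \<forall>j\<in>UNIV.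
        (\<lambda>t. increment_sum (\<lambda>u. \<phi> i j u - m i j) X t \<omega> / real t) \<longlonglongrightarrow> 0"
      by (intro AE_finite_allI) simp_all
    then show "AE \<omega> in M. (\<lambda>t. (1 / real t) *\<^sub>R quad_var b X t \<omega>) \<longlonglongrightarrow> (\<chi> i j. m i j)"
      by eventually_elim (intro quad_var_average_tendsto, auto simp: \<phi>_def)
  qed
qed

end

lemma finite_int_vec_box: "finite {u :: int^'n. \<forall>i. \<bar>u $ i\<bar> \<le> R}"
proof -
  have "{u :: int^'n. \<forall>i. \<bar>u $ i\<bar> \<le> R} = vec_nth -` PiE UNIV (\<lambda>_. {-R..R})"
    by (auto simp: PiE_iff abs_le_iff minus_le_iff)
  then show ?thesis
    by (simp add: finite_vimageI finite_PiE inj_def vec_eq_iff)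
qed

lemma infsum_eq_sum_if_zero_outside:
  fixes h :: "'a \<Rightarrow> real"
  assumes "finite U" "\<And>u. u \<notin> U \<Longrightarrow> h u = 0"
  shows "(\<Sum>\<^sub>\<infinity>u. h u) = (\<Sum>u\<in>U. h u)"
  using assms by (subst infsum_cong_neutral[where T=U and g=h]) auto

lemma walk_in_dynamic_env_if_bounded_range:
  fixes \<pi> :: "'S::finite pmf" and P0 :: "int^'n \<Rightarrow> real" and c :: "int^'n \<Rightarrow> 'S \<Rightarrow> real"
  assumes "(\<Sum>\<^sub>\<infinity>u. P0 u) = 1"
    and "\<forall>u s. 0 \<le> P0 u + c u s \<and> P0 u + c u s \<le> 1"
    and "\<forall>s. (\<Sum>\<^sub>\<infinity>u. c u s) = 0"
    and "\<forall>u. (\<Sum>s\<in>UNIV. c u s * pmf \<pi> s) = 0"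
    and "\<forall>u s. (\<exists>i. \<bar>u $ i\<bar> > R) \<longrightarrow> P0 u = 0 \<and> c u s = 0"
  defines "U \<equiv> {u :: int^'n. \<forall>i. \<bar>u $ i\<bar> \<le> R}"
  shows "walk_in_dynamic_env \<pi> P0 c U"
proof
  show "finite U"
    unfolding U_def by (rule finite_int_vec_box)
  moreover have "P0 u = 0 \<and> c u s = 0" if "u \<notin> U" for u s
    using assms(5) that by (auto simp: U_def not_le)
  ultimately show "(\<Sum>u\<in>U. P0 u) = 1" "(\<Sum>u\<in>U. c u s) = 0" for s
    using assms(1,3) infsum_eq_sum_if_zero_outside[of U] by metis+
qed (use assms(2,4) in auto)

theorem lemma3p3:
  fixes \<pi> :: "'S::finite pmf"
    and P0 :: "int^'n \<Rightarrow> real"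
    and c :: "int^'n \<Rightarrow> 'S \<Rightarrow> real"
    and bc :: "real^'n"
    and x0 :: "int^'n"
  assumes P0_nonneg: "\<forall>u. P0 u \<ge> 0"
    and P0_sum: "(\<Sum>\<^sub>\<infinity>u. P0 u) = 1"
    and trans_bounds: "\<forall>u s. 0 \<le> P0 u + c u s \<and> P0 u + c u s \<le> 1"
    and c_sum_u: "\<forall>s. (\<Sum>\<^sub>\<infinity>u. c u s) = 0"
    and c_mean_zero: "\<forall>u. (\<Sum>s\<in>UNIV. c u s * pmf \<pi> s) = 0"
    and bounded_range: "\<exists>R::int. \<forall>u s. (\<exists>i. \<bar>u $ i\<bar> > R) \<longrightarrow> P0 u = 0 \<and> c u s = 0"
    and drift_c: "\<forall>s i. (\<Sum>\<^sub>\<infinity>u. real_of_int (u $ i) * c u s) = bc $ i"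
  shows "AE \<xi> in env_law \<pi>.
     (\<forall>(M :: 'w measure) X. quenched_chain P0 c \<xi> x0 M X \<longrightarrow>
        (AE \<omega> in M.
          ((\<lambda>t. (1 / real t) *\<^sub>R quad_var
                  ((\<chi> i. (\<Sum>\<^sub>\<infinity>u. real_of_int (u $ i) * P0 u)) + bc) X t \<omega>)
            \<longlonglongrightarrow>
           (\<chi> i j. \<Sum>\<^sub>\<infinity>u.
              (real_of_int (u $ i) - ((\<chi> i. (\<Sum>\<^sub>\<infinity>u. real_of_int (u $ i) * P0 u)) + bc) $ i) *
              (real_of_int (u $ j) - ((\<chi> i. (\<Sum>\<^sub>\<infinity>u. real_of_int (u $ i) * P0 u)) + bc) $ j) *
              (P0 u + (\<Sum>s\<in>UNIV. pmf \<pi> s * c u s))))))"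
proof -
  obtain R :: int where R: "\<forall>u s. (\<exists>i. \<bar>u $ i\<bar> > R) \<longrightarrow> P0 u = 0 \<and> c u s = 0"
    using bounded_range by blast
  define U where "U = {u :: int^'n. \<forall>i. \<bar>u $ i\<bar> \<le> R}"
  interpret walk_in_dynamic_env \<pi> P0 c U x0
    unfolding U_def using P0_sum trans_bounds c_sum_u c_mean_zero R
    by (rule walk_in_dynamic_env_if_bounded_range)
  have "(\<Sum>s\<in>UNIV. pmf \<pi> s * c u s) = 0" for u
    using c_mean_zero by (simp add: mult.commute)
  moreover have "P0 u = 0" if "u \<notin> U" for u
    using R that by (auto simp: U_def not_le)
  ultimately have limit:
    "(\<Sum>\<^sub>\<infinity>u. (real_of_int (u $ i) - b $ i) * (real_of_int (u $ j) - b $ j) *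
        (P0 u + (\<Sum>s\<in>UNIV. pmf \<pi> s * c u s))) =
      (\<Sum>u\<in>U. (real_of_int (u $ i) - b $ i) * (real_of_int (u $ j) - b $ j) * P0 u)"
    for b :: "real^'n" and i j
    by (simp add: infsum_eq_sum_if_zero_outside[OF finite_steps])
  show ?thesis
    unfolding limit by (rule AE_env_quad_var_average_tendsto)
qed

end
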